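(* Under the standing assumptions, writing (R1) for the condition $\mathscr{R}(A^*AB)=\mathscr{R}(B)$, the following hold. (33) $\{M^{(1,2,3)}\}\subseteq\{C^{-1}B^{(1)}A^{-1}\}$; and $\{M^{(1,2,3)}\}\supseteq\{C^{-1}B^{(1)}A^{-1}\}\Leftrightarrow\{M^{(1,2,3)}\}=\{C^{-1}B^{(1)}A^{-1}\}\Leftrightarrow r(B)=m$. (34) $\{M^{(1,2,3)}\}\subseteq\{C^{-1}B^{(1,2)}A^{-1}\}$; and $\{M^{(1,2,3)}\}\supseteq\{C^{-1}B^{(1,2)}A^{-1}\}\Leftrightarrow\{M^{(1,2,3)}\}=\{C^{-1}B^{(1,2)}A^{-1}\}\Leftrightarrow B=0$ or $r(B)=m$. (35) $\{M^{(1,2,3)}\}\cap\{C^{-1}B^{(1,3)}A^{-1}\}\neq\emptyset\Leftrightarrow\{M^{(1,2,3)}\}\subseteq\{C^{-1}B^{(1,3)}A^{-1}\}\Leftrightarrow$ (R1); and $\{M^{(1,2,3)}\}\supseteq\{C^{-1}B^{(1,3)}A^{-1}\}\Leftrightarrow\{M^{(1,2,3)}\}=\{C^{-1}B^{(1,3)}A^{-1}\}\Leftrightarrow$ (R1) and $r(B)=\min\{m,n\}$. (36) $\{M^{(1,2,3)}\}\cap\{C^{-1}B^{(1,4)}A^{-1}\}\neq\emptyset$; $\{M^{(1,2,3)}\}\supseteq\{C^{-1}B^{(1,4)}A^{-1}\}\Leftrightarrow r(B)=m$; $\{M^{(1,2,3)}\}\subseteq\{C^{-1}B^{(1,4)}A^{-1}\}\Leftrightarrow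 B=0$ or $r(B)=n$; $\{M^{(1,2,3)}\}=\{C^{-1}B^{(1,4)}A^{-1}\}\Leftrightarrow r(B)=m=n$. (37) $\{M^{(1,2,3)}\}\cap\{C^{-1}B^{(1,2,3)}A^{-1}\}\neq\emptyset\Leftrightarrow\{M^{(1,2,3)}\}=\{C^{-1}B^{(1,2,3)}A^{-1}\}\Leftrightarrow$ (R1). (38) $\{M^{(1,2,3)}\}\cap\{C^{-1}B^{(1,2,4)}A^{-1}\}\neq\emptyset$; $\{M^{(1,2,3)}\}\supseteq\{C^{-1}B^{(1,2,4)}A^{-1}\}\Leftrightarrow B=0$ or $r(B)=m$; $\{M^{(1,2,3)}\}\subseteq\{C^{-1}B^{(1,2,4)}A^{-1}\}\Leftrightarrow B=0$ or $r(B)=n$; $\{M^{(1,2,3)}\}=\{C^{-1}B^{(1,2,4)}A^{-1}\}\Leftrightarrow B=0$ or $r(B)=m=n$. (39) $\{M^{(1,2,3)}\}\cap\{C^{-1}B^{(1,3,4)}A^{-1}\}\neq\emptyset\Leftrightarrow$ (R1); $\{M^{(1,2,3)}\}\supseteq\{C^{-1}B^{(1,3,4)}A^{-1}\}\Leftrightarrow$ (R1) and $r(B)=\min\{m,n\}$; $\{M^{(1,2,3)}\}\subseteq\{C^{-1}B^{(1,3,4)}A^{-1}\}\Leftrightarrow B=0$ or ((R1) and $r(B)=n$); $\{M^{(1,2,3)}\}=\{C^{-1}B^{(1,3,4)}A^{-1}\}\Leftrightarrow$ (R1) and $r(B)=n$. (40) $C^{-1}B^\dagger A^{-1}\in\{M^{(1,2,3)}\}\Leftrightarrow$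 (R1).
   Context: Standing assumptions: $m,n\ge1$; $A\in\mathbb{C}^{m\times m}$ and $C\in\mathbb{C}^{n\times n}$ are nonsingular; $B\in\mathbb{C}^{m\times n}$; $M=ABC$. For a complex matrix $X$, $X^*$ is its conjugate transpose, $r(X)$ its rank and $\mathscr{R}(X)$ its column space. For $X\in\mathbb{C}^{p\times q}$, a matrix $G\in\mathbb{C}^{q\times p}$ is called an $\{i,\ldots,j\}$-generalized inverse of $X$ (written $X^{(i,\ldots,j)}$) if it satisfies the equations numbered $i,\ldots,j$ among the four Penrose equations (i) $XGX=X$, (ii) $GXG=G$, (iii) $(XG)^*=XG$, (iv) $(GX)^*=GX$; $\{X^{(i,\ldots,j)}\}$ denotes the set of all such $G$. The Moore–Penrose inverse $X^\dagger$ is the unique matrix satisfying all four equations. For a type $(k,\ldots,l)$, $\{C^{-1}B^{(k,\ldots,l)}A^{-1}\}:=\{C^{-1}GA^{-1}: G\in\{B^{(k,\ldots,l)}\}\}$. *)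

theory Defs
  imports "HOL-Analysis.Analysis"
begin

definition ctrans :: "complex^'n^'m \<Rightarrow> complex^'m^'n" where
  "ctrans X = (\<chi> i j. cnj (X $ j $ i))"

definition colspace :: "complex^'n^'m \<Rightarrow> (complex^'m) set" where
  "colspace X = range (\<lambda>x. X *v x)"

definition gen_inv :: "nat set \<Rightarrow> complex^'n^'m \<Rightarrow> (complex^'m^'n) set" where
  "gen_inv S X = {G.
      (1 \<in> S \<longrightarrow> X ** G ** X = X) \<and>
      (2 \<in> S \<longrightarrow> G ** X ** G = G) \<and>
      (3 \<in> S \<longrightarrow> ctrans (X ** G) = X ** G) \<and>
      (4 \<in> S \<longrightarrow> ctrans (G ** X) = G ** X)}"

definition mp_inv :: "complex^'n^'m \<Rightarrow> complex^'m^'n" where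
  "mp_inv X = (THE G. G \<in> gen_inv {1,2,3,4} X)"

definition tr_set :: "complex^'m^'m \<Rightarrow> complex^'n^'m \<Rightarrow> complex^'n^'n \<Rightarrow> nat set \<Rightarrow> (complex^'m^'n) set" where
  "tr_set A B C S = (\<lambda>G. matrix_inv C ** G ** matrix_inv A) ` gen_inv S B"

end

theory Submission
  imports Defs
begin

text \<open>Since \<open>A\<close> and \<open>C\<close> are invertible, \<open>G \<mapsto> C G A\<close> is a bijection that maps the
  \<open>{1,2,3}\<close>-inverses of \<open>M\<close> onto the \<open>{1,2}\<close>-inverses \<open>Y\<close> of \<open>B\<close> with \<open>B Y = P\<close>, where
  \<open>P = B (A B)\<^sup>\<dagger> A\<close> is a (generally oblique) projector onto the column space of \<open>B\<close>,
  and maps each set \<open>C\<^sup>-\<^sup>1 B\<^sup>(\<^sup>S\<^sup>) A\<^sup>-\<^sup>1\<close> onto the \<open>S\<close>-inverses of \<open>B\<close>.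
  With \<open>E = B B\<^sup>\<dagger>\<close> and \<open>F = B\<^sup>\<dagger> B\<close>, the \<open>{1,3}\<close>-inverses of \<open>B\<close> are the \<open>Y\<close> with
  \<open>B Y = E\<close> and the \<open>{1,4}\<close>-inverses those with \<open>Y B = F\<close>, so every relation reduces to the
  conditions \<open>P = E\<close>, \<open>E = I\<close> (that is, \<open>r(B) = m\<close>) and \<open>F = I\<close> (that is, \<open>r(B) = n\<close>).
  \<open>P = E\<close> holds iff \<open>A E A\<^sup>-\<^sup>1\<close> is Hermitian, iff \<open>E\<close> commutes with \<open>A\<^sup>* A\<close>, iff
  \<open>A\<^sup>* A B\<close> and \<open>B\<close> have the same column space.  The inclusions that fail are refuted by
  perturbing \<open>B\<^sup>\<dagger>\<close> by a suitable nonzero term \<open>U Z V\<close>.\<close>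

lemma matrix_diff_ldistrib: "(A::'a::ring_1^'n^'m) ** (B - C) = A ** B - A ** C"
  by (simp add: matrix_matrix_mult_def vec_eq_iff sum_subtractf ring_distribs)

lemma matrix_diff_rdistrib: "((B::'a::ring_1^'n^'m) - C) ** A = B ** A - C ** A"
  by (simp add: matrix_matrix_mult_def vec_eq_iff sum_subtractf ring_distribs)

lemma matrix_add_rdistrib: "((B::'a::ring_1^'n^'m) + C) ** A = B ** A + C ** A"
  by (simp add: matrix_matrix_mult_def vec_eq_iff sum.distrib ring_distribs)

lemma matrix_mul_left_eq: "U ** V = R \<Longrightarrow> W ** U ** V = W ** R"
  by (simp flip: matrix_mul_assoc)

lemma ctrans_nth [simp]: "ctrans X $ i $ j = cnj (X $ j $ i)"
  by (simp add: ctrans_def)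

lemma ctrans_ctrans [simp]: "ctrans (ctrans X) = X"
  by (simp add: vec_eq_iff)

lemma ctrans_matrix_mult: "ctrans (X ** Y) = ctrans Y ** ctrans X"
  by (simp add: vec_eq_iff matrix_matrix_mult_def mult.commute)

lemma ctrans_mat_1 [simp]: "ctrans (mat 1 :: complex^'n^'n) = mat 1"
  by (simp add: vec_eq_iff mat_def)

lemma ctrans_mult_self_eq_0:
  fixes Z :: "complex^'n^'m"
  assumes "ctrans Z ** Z = 0"
  shows "Z = 0"
proof -
  have "Z $ i $ j = 0" for i j
  proof -
    have "complex_of_real (\<Sum>k\<in>UNIV. (cmod (Z $ k $ j))\<^sup>2) = (ctrans Z ** Z) $ j $ j"
      unfolding of_real_sum by (simp add: matrix_matrix_mult_def complex_norm_square mult.commute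
          del: of_real_power)
    then have "(\<Sum>k\<in>UNIV. (cmod (Z $ k $ j))\<^sup>2) = 0"
      by (simp only: assms zero_index of_real_eq_0_iff)
    then show ?thesis
      using sum_nonneg_eq_0_iff[of UNIV "\<lambda>k. (cmod (Z $ k $ j))\<^sup>2"] by simp
  qed
  then show ?thesis
    by (simp add: vec_eq_iff)
qed

lemma ctrans_mult_self_cancel:
  fixes Z :: "complex^'n^'m" and U V :: "complex^'p^'n"
  assumes "ctrans Z ** Z ** U = ctrans Z ** Z ** V"
  shows "Z ** U = Z ** V"
proof -
  have "ctrans Z ** Z ** (U - V) = 0"
    using assms by (simp add: matrix_diff_ldistrib)
  then have "ctrans (Z ** (U - V)) ** (Z ** (U - V)) = 0"
    by (simp add: ctrans_matrix_mult flip: matrix_mul_assoc)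
  then have "Z ** (U - V) = 0"
    by (rule ctrans_mult_self_eq_0)
  then show ?thesis
    by (simp add: matrix_diff_ldistrib)
qed

subsection \<open>Existence and uniqueness of the Moore--Penrose inverse\<close>

lemma inner_inverse_exists:
  fixes B :: "'a::field^'n^'m"
  shows "\<exists>G. B ** G ** B = B"
proof -
  obtain g where g: "Vector_Spaces.linear (*s) (*s) g" "\<forall>v\<in>range ((*v) B). B *v g v = v"
    using vec.linear_exists_right_inverse_on
        [OF matrix_vector_mul_linear_gen[of B] vec.subspace_UNIV]
    by blast
  have "B ** matrix g ** B = B"
    unfolding matrix_eq using g by (simp add: matrix_vector_mul_assoc[symmetric] matrix_works)
  then show ?thesis ..
qed

lemma gen_inv_13_exists:
  fixes B :: "complex^'n^'m"
  shows "\<exists>Y. Y \<in> gen_inv {1,3} B"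
proof -
  obtain G where G: "ctrans B ** B ** G ** (ctrans B ** B) = ctrans B ** B"
    using inner_inverse_exists by blast
  have BGB: "B ** (G ** ctrans B) ** B = B"
    using ctrans_mult_self_cancel[of B "G ** ctrans B ** B" "mat 1"] G
    by (simp add: matrix_mul_assoc)
  have "ctrans B ** B ** ctrans G ** ctrans B = ctrans B"
    using arg_cong[OF BGB, of ctrans] by (simp add: ctrans_matrix_mult matrix_mul_assoc)
  then have "B ** (G ** ctrans B) = B ** (G ** ctrans B) ** B ** ctrans G ** ctrans B"
    by (simp add: matrix_mul_assoc[symmetric])
  also have "\<dots> = ctrans (B ** (G ** ctrans B))"
    using BGB by (simp add: ctrans_matrix_mult matrix_mul_assoc)
  finally have "ctrans (B ** (G ** ctrans B)) = B ** (G ** ctrans B)" ..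
  with BGB show ?thesis
    by (auto simp: gen_inv_def)
qed

lemma gen_inv_14_exists:
  fixes B :: "complex^'n^'m"
  shows "\<exists>Y. Y \<in> gen_inv {1,4} B"
proof -
  obtain Y where Y: "ctrans B ** Y ** ctrans B = ctrans B" "ctrans (ctrans B ** Y) = ctrans B ** Y"
    using gen_inv_13_exists[of "ctrans B"] by (auto simp: gen_inv_def)
  have "B ** ctrans Y ** B = B" "ctrans (ctrans Y ** B) = ctrans Y ** B"
    using arg_cong[OF Y(1), of ctrans] arg_cong[OF Y(2), of ctrans]
    by (simp_all add: ctrans_matrix_mult matrix_mul_assoc)
  then have "ctrans Y \<in> gen_inv {1,4} B"
    by (simp add: gen_inv_def)
  then show ?thesis ..
qed

lemma gen_inv_13_mult_unique:
  assumes "U \<in> gen_inv {1,3} B" and "V \<in> gen_inv {1,3} B"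
  shows "B ** U = B ** V"
proof -
  have U: "B ** U ** B = B" "ctrans (B ** U) = B ** U"
    and V: "B ** V ** B = B" "ctrans (B ** V) = B ** V"
    using assms by (auto simp: gen_inv_def)
  have "B ** U = ctrans (B ** V ** (B ** U))"
    using U(2) V(1) by (simp add: matrix_mul_assoc)
  also have "\<dots> = B ** U ** (B ** V)"
    using U(2) V(2) by (simp only: ctrans_matrix_mult)
  also have "\<dots> = B ** V"
    using U(1) by (simp add: matrix_mul_assoc)
  finally show ?thesis .
qed

lemma gen_inv_14_mult_unique:
  assumes "U \<in> gen_inv {1,4} B" and "V \<in> gen_inv {1,4} B"
  shows "U ** B = V ** B"
proof -
  have U: "B ** U ** B = B" "ctrans (U ** B) = U ** B"
    and V: "B ** V ** B = B" "ctrans (V ** B) = V ** B"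
    using assms by (auto simp: gen_inv_def)
  have "U ** B = ctrans (U ** B ** (V ** B))"
    using U(2) V(1) by (simp add: matrix_mul_assoc[symmetric])
  also have "\<dots> = V ** B ** (U ** B)"
    using U(2) V(2) by (simp only: ctrans_matrix_mult)
  also have "\<dots> = V ** B"
    using U(1) by (simp add: matrix_mul_assoc[symmetric])
  finally show ?thesis .
qed

lemma gen_inv_1234_unique:
  assumes "Y \<in> gen_inv {1,2,3,4} B" and "Z \<in> gen_inv {1,2,3,4} B"
  shows "Y = Z"
proof -
  have BY: "B ** Y = B ** Z"
    by (rule gen_inv_13_mult_unique) (use assms in \<open>auto simp: gen_inv_def\<close>)
  have YB: "Y ** B = Z ** B"
    by (rule gen_inv_14_mult_unique) (use assms in \<open>auto simp: gen_inv_def\<close>)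
  have "Y = Y ** (B ** Y)"
    using assms(1) by (simp add: gen_inv_def matrix_mul_assoc)
  also have "\<dots> = Z ** B ** Z"
    using BY YB by (simp add: matrix_mul_assoc)
  also have "\<dots> = Z"
    using assms(2) by (simp add: gen_inv_def)
  finally show ?thesis .
qed

lemma gen_inv_1234_exists:
  fixes B :: "complex^'n^'m"
  shows "\<exists>Y. Y \<in> gen_inv {1,2,3,4} B"
proof -
  obtain U where U: "B ** U ** B = B" "ctrans (B ** U) = B ** U"
    using gen_inv_13_exists by (auto simp: gen_inv_def)
  obtain V where V: "B ** V ** B = B" "ctrans (V ** B) = V ** B"
    using gen_inv_14_exists by (auto simp: gen_inv_def)
  have "B ** (V ** B ** U) = B ** U"
    using V(1) by (simp add: matrix_mul_assoc)
  moreover have "V ** B ** U ** B = V ** B"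
    using U(1) by (simp add: matrix_mul_assoc[symmetric])
  moreover have "V ** B ** U ** B ** (V ** B ** U) = V ** B ** U"
  proof -
    have "V ** B ** U ** B ** (V ** B ** U) = V ** (B ** U ** B) ** (V ** B ** U)"
      by (simp add: matrix_mul_assoc)
    also have "\<dots> = V ** (B ** V ** B) ** U"
      using U(1) by (simp add: matrix_mul_assoc)
    also have "\<dots> = V ** B ** U"
      using V(1) by simp
    finally show ?thesis .
  qed
  ultimately have "V ** B ** U \<in> gen_inv {1,2,3,4} B"
    using U V by (simp add: gen_inv_def)
  then show ?thesis ..
qed

lemma mp_inv_gen_inv: "mp_inv B \<in> gen_inv {1,2,3,4} B"
  unfolding mp_inv_def using gen_inv_1234_exists gen_inv_1234_unique by (metis theI)

lemma mp_inv_inner: "B ** mp_inv B ** B = B"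
  and mp_inv_outer: "mp_inv B ** B ** mp_inv B = mp_inv B"
  and mp_inv_left_hermitian: "ctrans (B ** mp_inv B) = B ** mp_inv B"
  and mp_inv_right_hermitian: "ctrans (mp_inv B ** B) = mp_inv B ** B"
  using mp_inv_gen_inv[of B] by (auto simp: gen_inv_def)

lemma gen_inv_antimono: "S \<subseteq> T \<Longrightarrow> gen_inv T B \<subseteq> gen_inv S B"
  by (auto simp: gen_inv_def)

lemma mp_inv_mem_gen_inv: "S \<subseteq> {1,2,3,4} \<Longrightarrow> mp_inv B \<in> gen_inv S B"
  using gen_inv_antimono mp_inv_gen_inv by blast

lemma gen_inv_1_eq: "gen_inv {1} B = {Y. B ** Y ** B = B}"
  by (auto simp: gen_inv_def)

lemma gen_inv_12_eq: "gen_inv {1,2} B = {Y. B ** Y ** B = B \<and> Y ** B ** Y = Y}"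
  by (auto simp: gen_inv_def)

lemma gen_inv_13_eq: "gen_inv {1,3} B = {Y. B ** Y = B ** mp_inv B}"
proof (intro set_eqI iffI)
  fix Y
  assume "Y \<in> gen_inv {1,3} B"
  then show "Y \<in> {Y. B ** Y = B ** mp_inv B}"
    using gen_inv_13_mult_unique mp_inv_mem_gen_inv[of "{1,3}" B] by auto
next
  fix Y
  assume "Y \<in> {Y. B ** Y = B ** mp_inv B}"
  then show "Y \<in> gen_inv {1,3} B"
    using mp_inv_inner[of B] mp_inv_left_hermitian[of B] by (simp add: gen_inv_def)
qed

lemma gen_inv_14_eq: "gen_inv {1,4} B = {Y. Y ** B = mp_inv B ** B}"
proof (intro set_eqI iffI)
  fix Y
  assume "Y \<in> gen_inv {1,4} B"
  then show "Y \<in> {Y. Y ** B = mp_inv B ** B}"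
    using gen_inv_14_mult_unique mp_inv_mem_gen_inv[of "{1,4}" B] by auto
next
  fix Y
  assume "Y \<in> {Y. Y ** B = mp_inv B ** B}"
  then show "Y \<in> gen_inv {1,4} B"
    using mp_inv_inner[of B] mp_inv_right_hermitian[of B]
    by (simp add: gen_inv_def flip: matrix_mul_assoc)
qed

lemma gen_inv_123_eq: "gen_inv {1,2,3} B = {Y. B ** Y = B ** mp_inv B \<and> Y ** B ** Y = Y}"
proof -
  have "gen_inv {1,2,3} B = gen_inv {1,3} B \<inter> {Y. Y ** B ** Y = Y}"
    by (auto simp: gen_inv_def)
  then show ?thesis
    unfolding gen_inv_13_eq by blast
qed

lemma gen_inv_124_eq: "gen_inv {1,2,4} B = {Y. Y ** B = mp_inv B ** B \<and> Y ** B ** Y = Y}"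
proof -
  have "gen_inv {1,2,4} B = gen_inv {1,4} B \<inter> {Y. Y ** B ** Y = Y}"
    by (auto simp: gen_inv_def)
  then show ?thesis
    unfolding gen_inv_14_eq by blast
qed

lemma gen_inv_134_eq: "gen_inv {1,3,4} B = {Y. B ** Y = B ** mp_inv B \<and> Y ** B = mp_inv B ** B}"
proof -
  have "gen_inv {1,3,4} B = gen_inv {1,3} B \<inter> gen_inv {1,4} B"
    by (auto simp: gen_inv_def)
  then show ?thesis
    unfolding gen_inv_13_eq gen_inv_14_eq by blast
qed

lemma matrix_inv_cancel:
  assumes "invertible A"
  shows "matrix_inv A ** A = mat 1" "A ** matrix_inv A = mat 1"
    "X ** matrix_inv A ** A = X" "X ** A ** matrix_inv A = X"
proof -
  show *: "matrix_inv A ** A = mat 1" "A ** matrix_inv A = mat 1"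
    using assms unfolding invertible_def matrix_inv_def by (metis (mono_tags, lifting) someI_ex)+
  show "X ** matrix_inv A ** A = X" "X ** A ** matrix_inv A = X"
    by (simp_all add: * flip: matrix_mul_assoc)
qed

lemma invertible_mult_left_cancel:
  fixes A :: "'a::semiring_1^'m^'m"
  assumes "invertible A"
  shows "A ** X = A ** Y \<longleftrightarrow> X = Y"
proof
  assume "A ** X = A ** Y"
  then have "matrix_inv A ** A ** X = matrix_inv A ** A ** Y"
    by (simp flip: matrix_mul_assoc)
  then show "X = Y"
    using assms by (simp add: matrix_inv_cancel)
qed simp

lemma invertible_mult_right_cancel:
  fixes A :: "'a::semiring_1^'m^'m"
  assumes "invertible A"
  shows "X ** A = Y ** A \<longleftrightarrow> X = Y"
proof
  assume "X ** A = Y ** A"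
  then have "X ** A ** matrix_inv A = Y ** A ** matrix_inv A"
    by simp
  then show "X = Y"
    using assms by (simp add: matrix_inv_cancel)
qed simp

lemma invertible_ctrans:
  fixes A :: "complex^'m^'m"
  assumes "invertible A"
  shows "invertible (ctrans A)"
proof -
  have "ctrans (matrix_inv A ** A) = mat 1" "ctrans (A ** matrix_inv A) = mat 1"
    using assms by (simp_all add: matrix_inv_cancel)
  then show ?thesis
    unfolding invertible_def ctrans_matrix_mult by blast
qed

lemma inj_matrix_inv_sandwich:
  fixes A :: "'a::semiring_1^'m^'m" and C :: "'a^'n^'n"
  assumes "invertible A" and "invertible C"
  shows "inj (\<lambda>Y. matrix_inv C ** Y ** matrix_inv A)"
proof (rule injI)
  fix Y Z
  assume "matrix_inv C ** Y ** matrix_inv A = matrix_inv C ** Z ** matrix_inv A"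
  then have "C ** (matrix_inv C ** Y ** matrix_inv A) ** A =
      C ** (matrix_inv C ** Z ** matrix_inv A) ** A"
    by simp
  then show "Y = Z"
    using assms by (simp add: matrix_mul_assoc matrix_inv_cancel)
qed

lemma matrix_inv_sandwich_image:
  fixes A :: "'a::semiring_1^'m^'m" and C :: "'a^'n^'n"
  assumes "invertible A" and "invertible C"
  shows "(\<lambda>Y. matrix_inv C ** Y ** matrix_inv A) ` S = {G. C ** G ** A \<in> S}"
proof -
  have "C ** (matrix_inv C ** Y ** matrix_inv A) ** A = Y" for Y
    by (simp add: matrix_mul_assoc matrix_inv_cancel assms)
  moreover have "G = matrix_inv C ** (C ** G ** A) ** matrix_inv A" for G
    by (simp add: matrix_mul_assoc matrix_inv_cancel assms)
  ultimately show ?thesis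
    by auto
qed

lemma gen_inv_mult_right_invertible:
  fixes N :: "complex^'n^'m" and C :: "complex^'n^'n"
  assumes "invertible C" and "4 \<notin> S"
  shows "H \<in> gen_inv S (N ** C) \<longleftrightarrow> C ** H \<in> gen_inv S N"
proof -
  have "N ** C ** H ** (N ** C) = N ** C \<longleftrightarrow> N ** (C ** H) ** N = N"
    using invertible_mult_right_cancel[OF assms(1), of "N ** (C ** H) ** N" N]
    by (simp add: matrix_mul_assoc)
  moreover have "H ** (N ** C) ** H = H \<longleftrightarrow> C ** H ** N ** (C ** H) = C ** H"
    using invertible_mult_left_cancel[OF assms(1), of "H ** (N ** C) ** H" H]
    by (simp add: matrix_mul_assoc)
  ultimately show ?thesis
    using assms(2) by (simp add: gen_inv_def matrix_mul_assoc)
qed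

subsection \<open>Rank\<close>

text \<open>The library identifies row and column rank only for real matrices, so full row rank is
  characterised directly: the rows of \<open>B\<close> are the image of the standard basis under \<open>B\<^sup>T\<close>.\<close>

lemma rows_eq_image_cart_basis: "rows B = (\<lambda>x. transpose B *v x) ` cart_basis"
proof -
  have "row i B = transpose B *v axis i 1" for i
    by (simp add: vec_eq_iff row_def transpose_def matrix_vector_mult_def axis_def
        if_distrib[of "\<lambda>x. _ * x"] cong: if_cong)
  then show ?thesis
    by (auto simp: rows_def cart_basis_def)
qed

lemma rank_le_ncols: "rank (B::'a::field^'n^'m) \<le> CARD('n)"
  unfolding row_rank_def_gen by (rule dim_subset_UNIV_cart_gen)

lemma rank_le_nrows: "rank (B::'a::field^'n^'m) \<le> CARD('m)"
proof -
  have "rank B \<le> card (rows B)"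
    unfolding row_rank_def_gen
    by (rule vec.dim_le_card) (auto simp: rows_eq_image_cart_basis finite_cart_basis vec.span_superset)
  also have "\<dots> \<le> CARD('m)"
    unfolding rows_eq_image_cart_basis by (metis card_image_le card_cart_basis finite_cart_basis)
  finally show ?thesis .
qed

lemma rank_eq_ncols_iff: "rank (B::'a::field^'n^'m) = CARD('n) \<longleftrightarrow> (\<exists>L. L ** B = mat 1)"
  unfolding matrix_left_invertible_span_rows_gen row_rank_def_gen
  using vec.dim_eq_full[of "rows B"] by (simp add: vec.dimension_def card_cart_basis)

lemma rank_eq_nrows_iff: "rank (B::'a::field^'n^'m) = CARD('m) \<longleftrightarrow> (\<exists>R. B ** R = mat 1)"
proof -
  let ?f = "\<lambda>x. transpose B *v x"
  have "(\<exists>R. B ** R = mat 1) \<longleftrightarrow> inj ?f"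
    unfolding left_invertible_transpose[symmetric] by (rule matrix_left_invertible_injective)
  moreover have "rank B = vec.dim (?f ` cart_basis)"
    by (simp add: row_rank_def_gen rows_eq_image_cart_basis)
  moreover have "vec.dim (?f ` cart_basis) = CARD('m) \<longleftrightarrow> inj ?f"
  proof
    assume dim: "vec.dim (?f ` cart_basis) = CARD('m)"
    have "vec.dim (?f ` cart_basis) \<le> card (?f ` cart_basis)"
      by (simp add: vec.dim_le_card vec.span_superset finite_cart_basis)
    moreover have card_le: "card (?f ` cart_basis) \<le> card (cart_basis :: ('a^'m) set)"
      by (simp add: card_image_le finite_cart_basis)
    ultimately have card: "card (?f ` cart_basis) = card (cart_basis :: ('a^'m) set)"
      using dim by (simp add: card_cart_basis)
    then have "inj_on ?f cart_basis"
      by (simp add: eq_card_imp_inj_on finite_cart_basis)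
    moreover have "vec.independent (?f ` cart_basis)"
      by (rule vec.card_le_dim_spanning[of _ "?f ` cart_basis"])
        (use dim card in \<open>auto simp: vec.span_superset finite_cart_basis card_cart_basis\<close>)
    ultimately show "inj ?f"
      by (metis vec.inj_on_span_independent_image span_cart_basis)
  next
    assume inj: "inj ?f"
    have "vec.dim (?f ` cart_basis) = vec.dim (cart_basis :: ('a^'m) set)"
      by (rule vec.dim_image_eq[OF matrix_vector_mul_linear_gen])
        (use inj in \<open>simp only: span_cart_basis\<close>)
    then show "vec.dim (?f ` cart_basis) = CARD('m)"
      by (simp add: vec.dim_eq_card_independent independent_cart_basis card_cart_basis)
  qed
  ultimately show ?thesis
    by simp
qed

lemma rank_eq_nrows_iff_mp_inv: "rank (B :: complex^'n^'m) = CARD('m) \<longleftrightarrow> B ** mp_inv B = mat 1"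
proof -
  have "B ** mp_inv B = mat 1" if "B ** R = mat 1" for R
    using that mp_inv_inner[of B] by (metis matrix_mul_assoc matrix_mul_rid)
  then show ?thesis
    using rank_eq_nrows_iff by blast
qed

lemma rank_eq_ncols_iff_mp_inv: "rank (B :: complex^'n^'m) = CARD('n) \<longleftrightarrow> mp_inv B ** B = mat 1"
proof -
  have "mp_inv B ** B = mat 1" if "L ** B = mat 1" for L
    using that mp_inv_inner[of B] by (metis matrix_mul_assoc matrix_mul_lid)
  then show ?thesis
    using rank_eq_ncols_iff by blast
qed

lemma rank_eq_min_iff: "rank (B :: 'a::field^'n^'m) = min CARD('m) CARD('n) \<longleftrightarrow>
    rank B = CARD('m) \<or> rank B = CARD('n)"
  using rank_le_nrows[of B] rank_le_ncols[of B] by (auto simp: min_def)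

lemma mat_1_neq_0: "(mat 1 :: 'a::zero_neq_one^'n^'n) \<noteq> 0"
  by (simp add: vec_eq_iff mat_def)

lemma exists_matrix_neq_0: "\<exists>Z :: 'a::zero_neq_one^'n^'m. Z \<noteq> 0"
  by (rule exI[of _ "\<chi> i j. 1"]) (simp add: vec_eq_iff)

lemma exists_sandwich_neq_0:
  fixes U :: "'a::field^'q^'p" and V :: "'a^'s^'r"
  assumes "U \<noteq> 0" and "V \<noteq> 0"
  shows "\<exists>Z :: 'a^'r^'q. U ** Z ** V \<noteq> 0"
proof -
  obtain i j where ij: "U $ i $ j \<noteq> 0"
    using assms(1) by (metis vec_eq_iff zero_index)
  obtain k l where kl: "V $ k $ l \<noteq> 0"
    using assms(2) by (metis vec_eq_iff zero_index)
  let ?Z = "(\<chi> a b. if a = j \<and> b = k then 1 else 0) :: 'a^'r^'q"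
  have "(U ** ?Z) $ i $ b = (if b = k then U $ i $ j else 0)" for b
    by (simp add: matrix_matrix_mult_def if_distrib[of "\<lambda>x. _ * x"] cong: if_cong)
  then have "(U ** ?Z ** V) $ i $ l = U $ i $ j * V $ k $ l"
    by (simp add: matrix_matrix_mult_def[of "U ** ?Z"] if_distrib[of "\<lambda>x. x * _"]
        cong: if_cong)
  with ij kl have "U ** ?Z ** V \<noteq> 0"
    by (metis mult_eq_0_iff zero_index)
  then show ?thesis ..
qed

subsection \<open>Outer inverses with a prescribed range projector\<close>

text \<open>For \<open>P = B B\<^sup>\<dagger>\<close> this is the set of \<open>{1,2,3}\<close>-inverses of \<open>B\<close>; an invertible
  left factor \<open>A\<close> of \<open>B\<close> turns it into the oblique projector \<open>B (A B)\<^sup>\<dagger> A\<close>.\<close>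

definition gen_inv12_proj :: "complex^'n^'m \<Rightarrow> complex^'m^'m \<Rightarrow> (complex^'m^'n) set" where
  "gen_inv12_proj B P = {Y. B ** Y = P \<and> Y ** B ** Y = Y}"

lemma gen_inv_123_mult_left_invertible:
  fixes A :: "complex^'m^'m" and B :: "complex^'n^'m"
  assumes "invertible A"
  shows "Y \<in> gen_inv {1,2,3} (A ** B) \<longleftrightarrow> Y ** A \<in> gen_inv12_proj B (B ** mp_inv (A ** B) ** A)"
proof -
  have "A ** B ** Y = A ** B ** mp_inv (A ** B) \<longleftrightarrow> B ** Y = B ** mp_inv (A ** B)"
    using invertible_mult_left_cancel[OF assms] by (simp flip: matrix_mul_assoc)
  also have "\<dots> \<longleftrightarrow> B ** (Y ** A) = B ** mp_inv (A ** B) ** A"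
    using invertible_mult_right_cancel[OF assms, of "B ** Y" "B ** mp_inv (A ** B)"]
    by (simp add: matrix_mul_assoc)
  finally show ?thesis
    using invertible_mult_right_cancel[OF assms, of "Y ** (A ** B) ** Y" Y]
    unfolding gen_inv_123_eq gen_inv12_proj_def by (simp add: matrix_mul_assoc)
qed

lemma gen_inv_123_sandwich:
  fixes A :: "complex^'m^'m" and B :: "complex^'n^'m" and C :: "complex^'n^'n"
  assumes "invertible A" and "invertible C"
  shows "gen_inv {1,2,3} (A ** B ** C) =
    (\<lambda>Y. matrix_inv C ** Y ** matrix_inv A) ` gen_inv12_proj B (B ** mp_inv (A ** B) ** A)"
  using gen_inv_mult_right_invertible[OF assms(2), of "{1,2,3}"]
    gen_inv_123_mult_left_invertible[OF assms(1)]
  by (auto simp: matrix_inv_sandwich_image[OF assms])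

lemma colspace_mult_subset: "colspace (X ** Y) \<subseteq> colspace X"
  unfolding colspace_def by (auto simp: matrix_vector_mul_assoc[symmetric])

lemma colspace_subset_iff: "colspace Z \<subseteq> colspace B \<longleftrightarrow> B ** mp_inv B ** Z = Z"
proof
  assume sub: "colspace Z \<subseteq> colspace B"
  show "B ** mp_inv B ** Z = Z"
    unfolding matrix_eq
  proof
    fix x
    obtain y where y: "Z *v x = B *v y"
      using sub unfolding colspace_def by blast
    have "(B ** mp_inv B ** Z) *v x = (B ** mp_inv B ** B) *v y"
      by (simp add: y flip: matrix_vector_mul_assoc)
    then show "(B ** mp_inv B ** Z) *v x = Z *v x"
      by (simp add: y mp_inv_inner)
  qed
next
  assume "B ** mp_inv B ** Z = Z"
  then show "colspace Z \<subseteq> colspace B"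
    using colspace_mult_subset[of B "mp_inv B ** Z"] by (simp add: matrix_mul_assoc)
qed

lemma commute_range_proj_iff_colspace_eq:
  fixes B :: "complex^'n^'m" and K :: "complex^'m^'m"
  assumes K: "invertible K" "ctrans K = K"
  shows "B ** mp_inv B ** K = K ** (B ** mp_inv B) \<longleftrightarrow> colspace (K ** B) = colspace B"
proof -
  define E where "E = B ** mp_inv B"
  have EB: "E ** B = B" and E: "ctrans E = E"
    by (simp_all add: E_def mp_inv_inner mp_inv_left_hermitian)
  show ?thesis
    unfolding E_def[symmetric]
  proof
    assume comm: "E ** K = K ** E"
    have "K ** B = B ** (mp_inv B ** K ** B)"
      using comm EB by (metis E_def matrix_mul_assoc)
    then have "colspace (K ** B) \<subseteq> colspace B"
      by (metis colspace_mult_subset)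
    moreover have "B = K ** B ** (mp_inv B ** matrix_inv K ** B)"
    proof -
      have "matrix_inv K ** E = matrix_inv K ** (E ** K) ** matrix_inv K"
        using K(1) by (simp add: matrix_mul_assoc matrix_inv_cancel)
      also have "\<dots> = E ** matrix_inv K"
        using K(1) comm by (simp add: matrix_mul_assoc matrix_inv_cancel)
      finally have KiE: "matrix_inv K ** E = E ** matrix_inv K" .
      have "B = K ** matrix_inv K ** (E ** B)"
        using K(1) EB by (simp add: matrix_inv_cancel)
      also have "\<dots> = K ** (matrix_inv K ** E) ** B"
        by (simp add: matrix_mul_assoc)
      finally show ?thesis
        unfolding KiE by (simp add: E_def matrix_mul_assoc)
    qed
    then have "colspace B \<subseteq> colspace (K ** B)"
      by (metis colspace_mult_subset)
    ultimately show "colspace (K ** B) = colspace B" ..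
  next
    assume "colspace (K ** B) = colspace B"
    then have "E ** K ** B = K ** B"
      using colspace_subset_iff[of "K ** B" B] by (simp add: E_def matrix_mul_assoc)
    then have EKE: "E ** K ** E = K ** E"
      by (simp add: E_def matrix_mul_assoc)
    have "E ** K = ctrans (K ** E)"
      using E K(2) by (simp add: ctrans_matrix_mult)
    also have "\<dots> = ctrans (E ** K ** E)"
      by (simp only: EKE)
    also have "\<dots> = E ** K ** E"
      by (simp only: ctrans_matrix_mult E K(2) matrix_mul_assoc)
    finally show "E ** K = K ** E"
      using EKE by simp
  qed
qed

lemma hermitian_similar_iff_commute:
  fixes A H :: "complex^'m^'m"
  assumes A: "invertible A" and H: "ctrans H = H"
  shows "ctrans (A ** H ** matrix_inv A) = A ** H ** matrix_inv A \<longleftrightarrow>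
    H ** (ctrans A ** A) = ctrans A ** A ** H"
proof -
  have cA: "ctrans A ** ctrans (matrix_inv A) = mat 1"
    using arg_cong[OF matrix_inv_cancel(1)[OF A], of ctrans] by (simp add: ctrans_matrix_mult)
  have "ctrans (A ** H ** matrix_inv A) = A ** H ** matrix_inv A \<longleftrightarrow>
      ctrans A ** ctrans (A ** H ** matrix_inv A) ** A = ctrans A ** (A ** H ** matrix_inv A) ** A"
    by (simp add: invertible_mult_right_cancel[OF A]
        invertible_mult_left_cancel[OF invertible_ctrans[OF A]])
  also have "\<dots> \<longleftrightarrow> H ** (ctrans A ** A) = ctrans A ** A ** H"
    using A H cA by (simp add: ctrans_matrix_mult matrix_mul_assoc matrix_inv_cancel)
  finally show ?thesis .
qed

subsection \<open>Comparing outer inverses with the classes of generalized inverses\<close>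

locale range_projector =
  fixes B :: "complex^'n^'m" and P :: "complex^'m^'m"
  assumes proj_mult: "P ** B = B" and proj_factor: "\<exists>W. P = B ** W"
begin

abbreviation S :: "(complex^'m^'n) set" where "S \<equiv> gen_inv12_proj B P"

definition X :: "complex^'m^'n" where "X = mp_inv B"
definition E :: "complex^'m^'m" where "E = B ** X"
definition F :: "complex^'n^'n" where "F = X ** B"
definition E' :: "complex^'m^'m" where "E' = mat 1 - E"
definition F' :: "complex^'n^'n" where "F' = mat 1 - F"

lemma mult_eqs:
  "B ** X = E" "X ** B = F" "E ** B = B" "B ** F = B" "X ** E = X" "F ** X = X" "F ** F = F"
  "E' ** B = 0" "B ** F' = 0" "F ** F' = 0" "E ** P = P" "P ** E = E" "P ** B = B"
proof -
  show 1: "B ** X = E" "X ** B = F" "E ** B = B" "B ** F = B" "X ** E = X" "F ** X = X" "F ** F = F"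
    by (simp_all add: E_def F_def X_def mp_inv_inner mp_inv_outer matrix_mul_assoc)
  then show "E' ** B = 0" "B ** F' = 0" "F ** F' = 0"
    by (simp_all add: E'_def F'_def matrix_diff_ldistrib matrix_diff_rdistrib
        flip: matrix_mul_assoc)
  show "P ** B = B"
    by (rule proj_mult)
  then show "P ** E = E" "E ** P = P"
    using 1 proj_factor by (auto simp: matrix_mul_assoc E_def)
qed

text \<open>Products are normalised to left-associated form, so each identity is also needed behind an
  arbitrary left factor.\<close>

lemmas mult_simps = mult_eqs mult_eqs[THEN matrix_mul_left_eq]
  matrix_mul_assoc matrix_add_ldistrib matrix_add_rdistrib

lemma gen_inv_13_eq_E: "gen_inv {1,3} B = {Y. B ** Y = E}"
  using gen_inv_13_eq[of B] by (simp add: E_def X_def)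

lemma gen_inv_14_eq_F: "gen_inv {1,4} B = {Y. Y ** B = F}"
  using gen_inv_14_eq[of B] by (simp add: F_def X_def)

lemma gen_inv_123_eq_E: "gen_inv {1,2,3} B = {Y. B ** Y = E \<and> Y ** B ** Y = Y}"
  using gen_inv_123_eq[of B] by (simp add: E_def X_def)

lemma gen_inv_124_eq_F: "gen_inv {1,2,4} B = {Y. Y ** B = F \<and> Y ** B ** Y = Y}"
  using gen_inv_124_eq[of B] by (simp add: F_def X_def)

lemma gen_inv_134_eq_EF: "gen_inv {1,3,4} B = {Y. B ** Y = E \<and> Y ** B = F}"
  using gen_inv_134_eq[of B] by (simp add: E_def F_def X_def)

lemmas gen_inv_eqs = gen_inv_1_eq gen_inv_12_eq gen_inv_13_eq_E gen_inv_14_eq_F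
  gen_inv_123_eq_E gen_inv_124_eq_F gen_inv_134_eq_EF gen_inv12_proj_def

lemma X_plus_mem_gen_inv_14: "X + Z ** E' \<in> gen_inv {1,4} B"
  unfolding gen_inv_eqs by (simp add: mult_simps)

lemma X_plus_mem_gen_inv_124: "X + F ** Z ** E' \<in> gen_inv {1,2,4} B"
  unfolding gen_inv_eqs by (simp add: mult_simps)

lemma X_plus_mem_gen_inv_134: "X + F' ** Z ** E' \<in> gen_inv {1,3,4} B"
  and X_plus_outer_eq: "(X + F' ** Z ** E') ** B ** (X + F' ** Z ** E') = X"
  unfolding gen_inv_eqs by (simp_all add: mult_simps)

lemma X_P_plus_mem: "X ** P + F' ** Z ** P \<in> S"
  and X_P_plus_mult: "(X ** P + F' ** Z ** P) ** B = F + F' ** Z ** B"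
  unfolding gen_inv_eqs by (simp_all add: mult_simps)

lemma B_eq_0D:
  assumes "B = 0"
  shows "X = 0" and "E = 0" and "F = 0" and "P = E" and "S = {0}" and "gen_inv {1,2} B = {0}"
proof -
  show "X = 0"
    unfolding X_def using mp_inv_outer[of B] assms by simp
  then show "E = 0" "F = 0"
    unfolding E_def F_def using assms by simp_all
  have "P = 0"
    using proj_factor assms by auto
  with \<open>E = 0\<close> show "P = E"
    by simp
  show "S = {0}"
    using \<open>P = 0\<close> assms by (auto simp: gen_inv12_proj_def)
  show "gen_inv {1,2} B = {0}"
    unfolding gen_inv_12_eq using assms by auto
qed

lemma nonzero_if_E_eq_1: "E = mat 1 \<Longrightarrow> B \<noteq> 0"
  using mat_1_neq_0 by (auto simp: E_def)

lemma nonzero_if_F_eq_1: "F = mat 1 \<Longrightarrow> B \<noteq> 0"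
  using mat_1_neq_0 by (auto simp: F_def)

lemma X_mult_P_mem: "X ** P \<in> S" "X ** P \<in> gen_inv {1,2,4} B"
  unfolding gen_inv_eqs by (simp_all add: mult_simps)

lemma subset_gen_inv_12: "S \<subseteq> gen_inv {1,2} B"
  unfolding gen_inv_eqs using proj_mult by auto

lemma subset_gen_inv_1: "S \<subseteq> gen_inv {1} B"
  using subset_gen_inv_12 gen_inv_antimono[of "{1}" "{1,2}" B] by blast

lemma Int_gen_inv_14_neq_empty: "S \<inter> gen_inv {1,4} B \<noteq> {}"
  and Int_gen_inv_124_neq_empty: "S \<inter> gen_inv {1,2,4} B \<noteq> {}"
  using X_mult_P_mem gen_inv_antimono[of "{1,4}" "{1,2,4}" B] by auto

lemma X_mem_iff: "X \<in> S \<longleftrightarrow> P = E"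
  unfolding gen_inv_eqs by (auto simp: mult_simps)

lemma gen_inv_13_mem_iff: "Y \<in> S \<Longrightarrow> Y \<in> gen_inv {1,3} B \<longleftrightarrow> P = E"
  unfolding gen_inv_eqs by auto

lemma X_mem_gen_inv: "k \<subseteq> {1,2,3,4} \<Longrightarrow> X \<in> gen_inv k B"
  unfolding X_def by (rule mp_inv_mem_gen_inv)

lemma gen_inv_1_subset_if_E_eq_1:
  assumes "E = mat 1"
  shows "gen_inv {1} B \<subseteq> S"
proof
  fix Y
  assume "Y \<in> gen_inv {1} B"
  then have "B ** Y ** B = B"
    unfolding gen_inv_1_eq by simp
  have "B ** Y = B ** Y ** B ** X"
    using assms by (simp add: E_def flip: matrix_mul_assoc)
  also have "\<dots> = E"
    using \<open>B ** Y ** B = B\<close> by (simp add: E_def)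
  finally have "B ** Y = E" .
  moreover have "P = E"
    using assms mult_eqs(12) by simp
  ultimately show "Y \<in> S"
    using assms by (simp add: gen_inv12_proj_def flip: matrix_mul_assoc)
qed

lemma gen_inv_13_subset_if_F_eq_1:
  assumes "P = E" and "F = mat 1"
  shows "gen_inv {1,3} B \<subseteq> S"
proof
  fix Y
  assume "Y \<in> gen_inv {1,3} B"
  then have "B ** Y = E"
    unfolding gen_inv_13_eq_E by simp
  have "Y = X ** (B ** Y)"
    using assms(2) by (simp add: F_def matrix_mul_assoc)
  then have "Y = X"
    using \<open>B ** Y = E\<close> mult_eqs(5) by simp
  then show "Y \<in> S"
    using assms(1) X_mem_iff by simp
qed

text \<open>A failing inclusion is refuted by perturbing \<open>X\<close> (or \<open>X P\<close>) by a term \<open>U Z V\<close> that stays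
  inside the larger class; \<open>Z\<close> is chosen with \<open>exists_sandwich_neq_0\<close> so that the perturbation
  is visible in \<open>B Y\<close>, \<open>Y B\<close> or \<open>Y B Y\<close>.\<close>

lemma E_eq_1_if_gen_inv_14_subset:
  assumes sub: "gen_inv {1,4} B \<subseteq> S"
  shows "E = mat 1"
proof (rule ccontr)
  assume "E \<noteq> mat 1"
  then have E': "E' \<noteq> 0"
    by (simp add: E'_def)
  show False
  proof (cases "B = 0")
    case True
    obtain Z :: "complex^'m^'n" where "Z \<noteq> 0"
      using exists_matrix_neq_0 by blast
    moreover have "X + Z ** E' \<in> S"
      using sub X_plus_mem_gen_inv_14 by blast
    ultimately show False
      using B_eq_0D[OF True] by (simp add: E'_def)
  next
    case False
    then obtain Z where Z: "B ** Z ** E' \<noteq> 0"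
      using exists_sandwich_neq_0 E' by blast
    have "X \<in> S" "X + Z ** E' \<in> S"
      using sub X_plus_mem_gen_inv_14 X_mem_gen_inv[of "{1,4}"] by auto
    then have "B ** (X + Z ** E') = B ** X"
      by (simp add: gen_inv12_proj_def)
    with Z show False
      by (simp add: matrix_add_ldistrib matrix_mul_assoc)
  qed
qed

lemma B_eq_0_or_E_eq_1_if_gen_inv_124_subset:
  assumes sub: "gen_inv {1,2,4} B \<subseteq> S"
  shows "B = 0 \<or> E = mat 1"
proof (rule ccontr)
  assume "\<not> (B = 0 \<or> E = mat 1)"
  then obtain Z where Z: "B ** Z ** E' \<noteq> 0"
    using exists_sandwich_neq_0[of B E'] by (auto simp: E'_def)
  have "X \<in> S" "X + F ** Z ** E' \<in> S"
    using sub X_plus_mem_gen_inv_124 X_mem_gen_inv[of "{1,2,4}"] by auto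
  then have "B ** (X + F ** Z ** E') = B ** X"
    by (simp add: gen_inv12_proj_def)
  with Z show False
    by (simp add: mult_simps)
qed

lemma E_or_F_eq_1_if_gen_inv_134_subset:
  assumes sub: "gen_inv {1,3,4} B \<subseteq> S"
  shows "E = mat 1 \<or> F = mat 1"
proof (rule ccontr)
  assume "\<not> (E = mat 1 \<or> F = mat 1)"
  then obtain Z where Z: "F' ** Z ** E' \<noteq> 0"
    using exists_sandwich_neq_0[of F' E'] by (auto simp: E'_def F'_def)
  have "X + F' ** Z ** E' \<in> S"
    using sub X_plus_mem_gen_inv_134 by blast
  then have "X = X + F' ** Z ** E'"
    using X_plus_outer_eq by (simp add: gen_inv12_proj_def)
  with Z show False
    by simp
qed

lemma subset_gen_inv_14_iff: "S \<subseteq> gen_inv {1,4} B \<longleftrightarrow> B = 0 \<or> F = mat 1"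
proof
  assume sub: "S \<subseteq> gen_inv {1,4} B"
  show "B = 0 \<or> F = mat 1"
  proof (rule ccontr)
    assume "\<not> (B = 0 \<or> F = mat 1)"
    then obtain Z where Z: "F' ** Z ** B \<noteq> 0"
      using exists_sandwich_neq_0[of F' B] by (auto simp: F'_def)
    have "X ** P + F' ** Z ** P \<in> gen_inv {1,4} B"
      using sub X_P_plus_mem by blast
    with Z show False
      unfolding gen_inv_14_eq_F by (simp add: X_P_plus_mult)
  qed
next
  assume "B = 0 \<or> F = mat 1"
  then show "S \<subseteq> gen_inv {1,4} B"
  proof
    assume "B = 0"
    show ?thesis
      using B_eq_0D[OF \<open>B = 0\<close>] unfolding gen_inv_14_eq_F by simp
  next
    assume F: "F = mat 1"
    show ?thesis
    proof
      fix Y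
      assume "Y \<in> S"
      then have "B ** Y ** B = B"
        using subset_gen_inv_12 unfolding gen_inv_12_eq by blast
      then have "F ** Y ** B = F"
        by (simp add: F_def flip: matrix_mul_assoc)
      then show "Y \<in> gen_inv {1,4} B"
        using F unfolding gen_inv_14_eq_F by simp
    qed
  qed
qed

lemma gen_inv_1_subset_iff: "gen_inv {1} B \<subseteq> S \<longleftrightarrow> E = mat 1"
  using gen_inv_antimono[of "{1}" "{1,4}" B] E_eq_1_if_gen_inv_14_subset gen_inv_1_subset_if_E_eq_1
  by blast

lemma gen_inv_14_subset_iff: "gen_inv {1,4} B \<subseteq> S \<longleftrightarrow> E = mat 1"
  using gen_inv_antimono[of "{1}" "{1,4}" B] E_eq_1_if_gen_inv_14_subset gen_inv_1_subset_if_E_eq_1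
  by blast

lemma gen_inv_12_subset_iff: "gen_inv {1,2} B \<subseteq> S \<longleftrightarrow> B = 0 \<or> E = mat 1"
  using gen_inv_antimono[of "{1,2}" "{1,2,4}" B] gen_inv_antimono[of "{1}" "{1,2}" B]
    B_eq_0_or_E_eq_1_if_gen_inv_124_subset gen_inv_1_subset_if_E_eq_1 B_eq_0D
  by blast

lemma gen_inv_124_subset_iff: "gen_inv {1,2,4} B \<subseteq> S \<longleftrightarrow> B = 0 \<or> E = mat 1"
  using gen_inv_antimono[of "{1,2}" "{1,2,4}" B] gen_inv_12_subset_iff
    B_eq_0_or_E_eq_1_if_gen_inv_124_subset
  by blast

lemma gen_inv_13_subset_iff: "gen_inv {1,3} B \<subseteq> S \<longleftrightarrow> P = E \<and> (E = mat 1 \<or> F = mat 1)"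
  using gen_inv_antimono[of "{1,3}" "{1,3,4}" B] gen_inv_antimono[of "{1}" "{1,3}" B]
    X_mem_gen_inv[of "{1,3}"] X_mem_iff E_or_F_eq_1_if_gen_inv_134_subset
    gen_inv_1_subset_if_E_eq_1 gen_inv_13_subset_if_F_eq_1
  by blast

lemma gen_inv_134_subset_iff: "gen_inv {1,3,4} B \<subseteq> S \<longleftrightarrow> P = E \<and> (E = mat 1 \<or> F = mat 1)"
  using gen_inv_antimono[of "{1,3}" "{1,3,4}" B] gen_inv_13_subset_iff
    X_mem_gen_inv[of "{1,3,4}"] X_mem_iff E_or_F_eq_1_if_gen_inv_134_subset
  by blast

lemma subset_gen_inv_13_iff: "S \<subseteq> gen_inv {1,3} B \<longleftrightarrow> P = E"
  using gen_inv_13_mem_iff X_mult_P_mem(1) by blast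

lemma Int_gen_inv_13_iff: "S \<inter> gen_inv {1,3} B \<noteq> {} \<longleftrightarrow> P = E"
  using gen_inv_13_mem_iff X_mult_P_mem(1) by blast

lemma subset_gen_inv_124_iff: "S \<subseteq> gen_inv {1,2,4} B \<longleftrightarrow> B = 0 \<or> F = mat 1"
proof -
  have "gen_inv {1,2,4} B = gen_inv {1,2} B \<inter> gen_inv {1,4} B"
    by (auto simp: gen_inv_def)
  then show ?thesis
    using subset_gen_inv_12 subset_gen_inv_14_iff by blast
qed

lemma subset_gen_inv_134_iff: "S \<subseteq> gen_inv {1,3,4} B \<longleftrightarrow> B = 0 \<or> (P = E \<and> F = mat 1)"
proof -
  have "gen_inv {1,3,4} B = gen_inv {1,3} B \<inter> gen_inv {1,4} B"
    by (auto simp: gen_inv_def)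
  then show ?thesis
    using subset_gen_inv_13_iff subset_gen_inv_14_iff B_eq_0D(4) by blast
qed

lemma Int_gen_inv_134_iff: "S \<inter> gen_inv {1,3,4} B \<noteq> {} \<longleftrightarrow> P = E"
  using gen_inv_antimono[of "{1,3}" "{1,3,4}" B] Int_gen_inv_13_iff
    X_mem_gen_inv[of "{1,3,4}"] X_mem_iff
  by blast

lemma gen_inv_123_eq_iff: "S = gen_inv {1,2,3} B \<longleftrightarrow> P = E"
  using X_mem_gen_inv[of "{1,2,3}"] X_mem_iff unfolding gen_inv_123_eq_E gen_inv12_proj_def by blast

lemma Int_gen_inv_123_iff: "S \<inter> gen_inv {1,2,3} B \<noteq> {} \<longleftrightarrow> P = E"
  using gen_inv_antimono[of "{1,3}" "{1,2,3}" B] Int_gen_inv_13_iff gen_inv_123_eq_iff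
    X_mult_P_mem(1)
  by blast

end

lemma range_projector_oblique:
  fixes A :: "complex^'m^'m" and B :: "complex^'n^'m"
  assumes "invertible A"
  shows "range_projector B (B ** mp_inv (A ** B) ** A)"
proof
  have "A ** (B ** mp_inv (A ** B) ** A ** B) = A ** B"
    using mp_inv_inner[of "A ** B"] by (simp add: matrix_mul_assoc)
  then show "B ** mp_inv (A ** B) ** A ** B = B"
    using invertible_mult_left_cancel[OF assms] by blast
  show "\<exists>W. B ** mp_inv (A ** B) ** A = B ** W"
    by (metis matrix_mul_assoc)
qed

lemma oblique_proj_eq_iff_colspace_eq:
  fixes A :: "complex^'m^'m" and B :: "complex^'n^'m"
  assumes A: "invertible A"
  shows "B ** mp_inv (A ** B) ** A = B ** mp_inv B \<longleftrightarrow> colspace (ctrans A ** A ** B) = colspace B"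
proof -
  interpret range_projector B "B ** mp_inv (A ** B) ** A"
    using A by (rule range_projector_oblique)
  have "B ** mp_inv (A ** B) ** A = E \<longleftrightarrow> X ** matrix_inv A \<in> gen_inv {1,2,3} (A ** B)"
    using X_mem_iff gen_inv_123_mult_left_invertible[OF A, of "X ** matrix_inv A"] A
    by (simp add: matrix_inv_cancel)
  also have "\<dots> \<longleftrightarrow> ctrans (A ** E ** matrix_inv A) = A ** E ** matrix_inv A"
    using A by (simp add: gen_inv_def mult_simps matrix_inv_cancel)
  also have "\<dots> \<longleftrightarrow> E ** (ctrans A ** A) = ctrans A ** A ** E"
    using A by (rule hermitian_similar_iff_commute) (simp add: E_def X_def mp_inv_left_hermitian)
  also have "\<dots> \<longleftrightarrow> colspace (ctrans A ** A ** B) = colspace B"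
    unfolding E_def X_def
    by (rule commute_range_proj_iff_colspace_eq)
      (simp_all add: A invertible_mult invertible_ctrans ctrans_matrix_mult)
  finally show ?thesis
    by (simp add: E_def X_def)
qed

theorem theorem4p2:
  fixes A :: "complex^'m^'m" and B :: "complex^'n^'m" and C :: "complex^'n^'n"
  assumes invA: "invertible A" and invC: "invertible C"
  defines "M \<equiv> A ** B ** C"
  defines "R1 \<equiv> (colspace (ctrans A ** A ** B) = colspace B)"
  defines "m \<equiv> CARD('m)" and "n \<equiv> CARD('n)"
  defines "G \<equiv> gen_inv {1,2,3} M"
  defines "T \<equiv> tr_set A B C"
  shows
   "(G \<subseteq> T {1}) \<and>
    ((G \<supseteq> T {1}) = (G = T {1})) \<and> ((G = T {1}) = (rank B = m))
    \<and> (G \<subseteq> T {1,2}) \<and>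
    ((G \<supseteq> T {1,2}) = (G = T {1,2})) \<and> ((G = T {1,2}) = (B = 0 \<or> rank B = m))
    \<and> ((G \<inter> T {1,3} \<noteq> {}) = (G \<subseteq> T {1,3})) \<and> ((G \<subseteq> T {1,3}) = R1) \<and>
    ((G \<supseteq> T {1,3}) = (G = T {1,3})) \<and> ((G = T {1,3}) = (R1 \<and> rank B = min m n))
    \<and> (G \<inter> T {1,4} \<noteq> {}) \<and>
    ((G \<supseteq> T {1,4}) = (rank B = m)) \<and>
    ((G \<subseteq> T {1,4}) = (B = 0 \<or> rank B = n)) \<and>
    ((G = T {1,4}) = (rank B = m \<and> m = n))
    \<and> ((G \<inter> T {1,2,3} \<noteq> {}) = (G = T {1,2,3})) \<and> ((G = T {1,2,3}) = R1)
    \<and> (G \<inter> T {1,2,4} \<noteq> {}) \<and>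
    ((G \<supseteq> T {1,2,4}) = (B = 0 \<or> rank B = m)) \<and>
    ((G \<subseteq> T {1,2,4}) = (B = 0 \<or> rank B = n)) \<and>
    ((G = T {1,2,4}) = (B = 0 \<or> (rank B = m \<and> m = n)))
    \<and> ((G \<inter> T {1,3,4} \<noteq> {}) = R1) \<and>
    ((G \<supseteq> T {1,3,4}) = (R1 \<and> rank B = min m n)) \<and>
    ((G \<subseteq> T {1,3,4}) = (B = 0 \<or> (R1 \<and> rank B = n))) \<and>
    ((G = T {1,3,4}) = (R1 \<and> rank B = n))
    \<and> ((matrix_inv C ** mp_inv B ** matrix_inv A \<in> G) = R1)"
proof -
  define f where "f Y = matrix_inv C ** Y ** matrix_inv A" for Y :: "complex^'m^'n"
  define P where "P = B ** mp_inv (A ** B) ** A"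
  interpret range_projector B P
    unfolding P_def using invA by (rule range_projector_oblique)
  have inj: "inj f"
    unfolding f_def using invA invC by (rule inj_matrix_inv_sandwich)
  have G: "G = f ` S"
    unfolding G_def M_def f_def P_def using invA invC by (rule gen_inv_123_sandwich)
  have T: "T k = f ` gen_inv k B" for k
    by (simp add: T_def tr_set_def f_def)
  have R1: "R1 \<longleftrightarrow> P = E"
    unfolding R1_def P_def E_def X_def
    using invA by (rule oblique_proj_eq_iff_colspace_eq[symmetric])
  have m: "rank B = m \<longleftrightarrow> E = mat 1" and n: "rank B = n \<longleftrightarrow> F = mat 1"
    by (simp_all add: m_def n_def E_def F_def X_def
        rank_eq_nrows_iff_mp_inv rank_eq_ncols_iff_mp_inv)
  have min: "rank B = min m n \<longleftrightarrow> E = mat 1 \<or> F = mat 1"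
    using m n by (simp add: m_def n_def rank_eq_min_iff)
  have mn: "rank B = m \<and> m = n \<longleftrightarrow> E = mat 1 \<and> F = mat 1"
    using m n by auto
  have mp: "matrix_inv C ** mp_inv B ** matrix_inv A \<in> G \<longleftrightarrow> X \<in> S"
    unfolding G using inj_image_mem_iff[OF inj, of X S] by (simp add: f_def X_def)
  show ?thesis
    unfolding mp
    unfolding G T inj_image_subset_iff[OF inj] inj_image_eq_iff[OF inj] image_Int[OF inj, symmetric]
      image_is_empty
    unfolding gen_inv_123_eq_iff
    unfolding set_eq_subset[of S] R1 mn
    unfolding m n min
    by (simp only: subset_gen_inv_1 subset_gen_inv_12 Int_gen_inv_14_neq_empty
        Int_gen_inv_124_neq_empty gen_inv_1_subset_iff gen_inv_12_subset_iff gen_inv_13_subset_iff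
        gen_inv_14_subset_iff gen_inv_124_subset_iff gen_inv_134_subset_iff subset_gen_inv_13_iff
        subset_gen_inv_14_iff subset_gen_inv_124_iff subset_gen_inv_134_iff Int_gen_inv_13_iff
        Int_gen_inv_123_iff Int_gen_inv_134_iff X_mem_iff)
      (use nonzero_if_E_eq_1 nonzero_if_F_eq_1 B_eq_0D(4) in blast)
qed

end
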